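(* For every odd $N\ge3$ we have ${}'\mathcal X^+_{N-2}={}^\sharp\mathcal X^+_{N-2}$.
   Context: For an odd integer $M\ge3$ the following objects are defined (we write $[i,j]=\{h\in\mathbb Z:i\le h\le j\}$, empty if $i>j$). A $2$-element subset $\{i,j\}\subseteq[1,M]$ is written $ij$ when either ($i<j$ and $j-i$ odd) or ($i>j$ and $i-j$ even); each $2$-element subset has exactly one such writing. Let $\mathcal P_M$ be the set of all finite sets $B$ of pairwise disjoint $2$-element subsets of $[1,M]$; for $B\in\mathcal P_M$ let $\mathrm{supp}(B)=\bigcup_{X\in B}X$, $B^0=\{\{i,j\}\in B: i-j\text{ even}\}$, $B^1=\{\{i,j\}\in B: i-j\text{ odd}\}$. A set $X\subseteq[1,M]$ is $0$-covered (resp. $1$-covered) by $B^1$ if there are $a_1b_1,\dots,a_sb_s\in B^1$ ($s\ge0$, so $a_r<b_r$) with $X=[a_1,b_1]\sqcup\dots\sqcup[a_s,b_s]$ (resp. $X=[a_1,b_1]\sqcup\dots\sqcup[a_s,b_s]\sqcup\{u\}$), disjoint unions. Let ${}^*\mathcal P_M$ be the set of $B\in\mathcal P_M$ such that: for every $ij\in B^1$, $[i+1,j-1]$ is $0$-covered by $B^1$; and there is a sequence $(i_1,\dots,i_{2s})$ in $[1,M]$ with $B^0=\{i_{2s}i_1,i_{2s-1}i_2,\dots,i_{s+1}i_s\}$ ($s=|B^0|$; unique) such that, if $s\ge1$, each of $[i_1+1,i_2-1],\dots,[i_{s-1}+1,i_s-1],[i_{s+1}+1,i_{s+2}-1],\dots,[i_{2s-1}+1,i_{2s}-1]$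 is $0$-covered by $B^1$. Let $\mathcal X^+_{M-2}$ be the set of $B\in{}^*\mathcal P_M$ such that $M\notin\mathrm{supp}(B)$ and either $s=0$, or $s$ is odd and either (i) $[1,i_1-1]$ is $1$-covered and $[i_{2s}+1,M-1]$ is $0$-covered by $B^1$, or (ii) $[1,i_1-1]$ is $0$-covered and $[i_{2s}+1,M-1]$ is $1$-covered by $B^1$. For $B\in\mathcal X^+_{M-2}$ with $s\ge1$ there is a unique $u_B$: in case (i), $u_B\in[1,i_1-1]$ with $[1,u_B-1]$, $[u_B+1,i_1-1]$ $0$-covered by $B^1$ ($u_B$ odd); in case (ii), $u_B\in[i_{2s}+1,M-1]$ with $[i_{2s}+1,u_B-1]$, $[u_B+1,M-1]$ $0$-covered by $B^1$ ($u_B$ even). Let ${}'\mathcal X^+_{M-2}$ be the set of $B\in\mathcal X^+_{M-2}$ such that either ($|B^0|=0$ and $M-1\notin\mathrm{supp}(B)$) or ($|B^0|\ge1$ and $u_B$ even). For odd $M\ge5$ and $k\in[1,M-1]$ let $\iota_k:[1,M-2]\to[1,M]$ be $\iota_k(i)=i$ for $i<k$ and $\iota_k(i)=i+2$ for $i\ge k$, and let $I_k:\mathcal P_{M-2}\to\mathcal P_M$ send $B$ to $\{\{\iota_k(a),\iota_k(b)\}:\{a,b\}\in B\}\cup\{\{k,k+1\}\}$. Let ${}'Pr^+_{M-2}\subseteq\mathcal P_M$ consist of $\emptyset$ and of the sets $\{\{M-2,1\},\{M-3,2\},\dots,\{M-\tau,\tau-1\}\}$ for even $\tau\in[2,(M-1)/2]$.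 Define ${}^\sharp\mathcal X^+_{M-2}\subseteq\mathcal P_M$ recursively: ${}^\sharp\mathcal X^+_1=\{\emptyset\}\subseteq\mathcal P_3$; for $M\ge5$, $B\in\mathcal P_M$ lies in ${}^\sharp\mathcal X^+_{M-2}$ iff either $B\in{}'Pr^+_{M-2}$, or $|B^0|>0$ and $B=I_k(B')$ for some $B'\in{}^\sharp\mathcal X^+_{M-4}$ and $k\in[1,M-2]$, or $|B^0|=0$ and $B=I_k(B')$ for some $B'\in{}^\sharp\mathcal X^+_{M-4}$ and $k\in[1,M-3]$. *)

theory Defs
  imports Main
begin

text \<open>Pairs are 2-element subsets of nat; the parameter M is the odd integer M of the paper.
  PM M is the paper's P_M.\<close>

definition PM :: "nat \<Rightarrow> nat set set set" where
  "PM M = {B. finite B \<and> (\<forall>X\<in>B. X \<subseteq> {1..M} \<and> card X = 2)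
              \<and> (\<forall>X\<in>B. \<forall>Y\<in>B. X \<noteq> Y \<longrightarrow> X \<inter> Y = {})}"

definition supp :: "nat set set \<Rightarrow> nat set" where
  "supp B = \<Union>B"

text \<open>For a 2-element set {i,j}, i-j is even iff Max - Min is even.\<close>
definition B0 :: "nat set set \<Rightarrow> nat set set" where
  "B0 B = {X\<in>B. even (Max X - Min X)}"

definition B1 :: "nat set set \<Rightarrow> nat set set" where
  "B1 B = {X\<in>B. odd (Max X - Min X)}"

definition ivl :: "nat set \<Rightarrow> nat set" where
  "ivl P = {Min P..Max P}"

definition cov0 :: "nat set set \<Rightarrow> nat set \<Rightarrow> bool" where
  "cov0 C X \<longleftrightarrow> (\<exists>S\<subseteq>C. (\<forall>P\<in>S. \<forall>Q\<in>S. P \<noteq> Q \<longrightarrow> ivl P \<inter> ivl Q = {})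
                      \<and> X = (\<Union>P\<in>S. ivl P))"

definition cov1 :: "nat set set \<Rightarrow> nat set \<Rightarrow> bool" where
  "cov1 C X \<longleftrightarrow> (\<exists>S\<subseteq>C. \<exists>u. (\<forall>P\<in>S. \<forall>Q\<in>S. P \<noteq> Q \<longrightarrow> ivl P \<inter> ivl Q = {})
                      \<and> u \<notin> (\<Union>P\<in>S. ivl P) \<and> X = insert u (\<Union>P\<in>S. ivl P))"

definition seq_ok :: "nat \<Rightarrow> nat set set \<Rightarrow> nat \<Rightarrow> (nat \<Rightarrow> nat) \<Rightarrow> bool" where
  "seq_ok M B s i \<longleftrightarrow> s = card (B0 B)
     \<and> (\<forall>k\<in>{1..2*s}. i k \<in> {1..M})
     \<and> strict_mono_on {1..2*s} i
     \<and> B0 B = {{i (2*s+1-k), i k} | k. k \<in> {1..s}}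
     \<and> (\<forall>k\<in>{1..<s}. cov0 (B1 B) {i k + 1 .. i (k+1) - 1})
     \<and> (\<forall>k\<in>{s+1..<2*s}. cov0 (B1 B) {i k + 1 .. i (k+1) - 1})"

definition starP :: "nat \<Rightarrow> nat set set set" where
  "starP M = {B \<in> PM M.
     (\<forall>X\<in>B1 B. cov0 (B1 B) {Min X + 1 .. Max X - 1})
     \<and> (\<exists>i. seq_ok M B (card (B0 B)) i)}"

definition Xplus :: "nat \<Rightarrow> nat set set set" where
  "Xplus M = {B \<in> starP M. M \<notin> supp B \<and>
     (card (B0 B) = 0 \<or>
      (odd (card (B0 B)) \<and> (\<exists>i. seq_ok M B (card (B0 B)) i \<and>
         ((cov1 (B1 B) {1 .. i 1 - 1} \<and> cov0 (B1 B) {i (2 * card (B0 B)) + 1 .. M - 1})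
        \<or> (cov0 (B1 B) {1 .. i 1 - 1} \<and> cov1 (B1 B) {i (2 * card (B0 B)) + 1 .. M - 1})))))}"

definition is_uB :: "nat \<Rightarrow> nat set set \<Rightarrow> (nat \<Rightarrow> nat) \<Rightarrow> nat \<Rightarrow> bool" where
  "is_uB M B i u \<longleftrightarrow> (let s = card (B0 B) in
     (cov1 (B1 B) {1 .. i 1 - 1} \<and> cov0 (B1 B) {i (2*s) + 1 .. M - 1}
        \<and> u \<in> {1 .. i 1 - 1} \<and> cov0 (B1 B) {1 .. u - 1} \<and> cov0 (B1 B) {u + 1 .. i 1 - 1})
   \<or> (cov0 (B1 B) {1 .. i 1 - 1} \<and> cov1 (B1 B) {i (2*s) + 1 .. M - 1}
        \<and> u \<in> {i (2*s) + 1 .. M - 1} \<and> cov0 (B1 B) {i (2*s) + 1 .. u - 1}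
        \<and> cov0 (B1 B) {u + 1 .. M - 1}))"

text \<open>Xprime M is the paper's 'X^+_{M-2}.\<close>
definition Xprime :: "nat \<Rightarrow> nat set set set" where
  "Xprime M = {B \<in> Xplus M.
     (card (B0 B) = 0 \<and> M - 1 \<notin> supp B)
   \<or> (card (B0 B) \<ge> 1 \<and> (\<exists>i u. seq_ok M B (card (B0 B)) i \<and> is_uB M B i u \<and> even u))}"

definition iota :: "nat \<Rightarrow> nat \<Rightarrow> nat" where
  "iota k i = (if i < k then i else i + 2)"

definition Ik :: "nat \<Rightarrow> nat set set \<Rightarrow> nat set set" where
  "Ik k B = (\<lambda>X. iota k ` X) ` B \<union> {{k, k+1}}"

definition PrP :: "nat \<Rightarrow> nat set set set" where
  "PrP M = insert {} {{{M - 1 - j, j} | j. j \<in> {1..\<tau>-1}} | \<tau>. even \<tau> \<and> \<tau> \<in> {2..(M-1) div 2}}"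

text \<open>sharpX M is the paper's #X^+_{M-2}; sharpX 3 = {{}}.\<close>
fun sharpX :: "nat \<Rightarrow> nat set set set" where
  "sharpX M = (if M < 5 then {{}} else
     {B \<in> PM M. B \<in> PrP M
        \<or> (card (B0 B) > 0 \<and> (\<exists>k\<in>{1..M-2}. \<exists>B'\<in>sharpX (M-2). B = Ik k B'))
        \<or> (card (B0 B) = 0 \<and> (\<exists>k\<in>{1..M-3}. \<exists>B'\<in>sharpX (M-2). B = Ik k B'))})"

end

theory Submission
  imports Defs
begin

text \<open>
  Induction on \<open>N\<close>, driven by the insertion map \<open>Ik k\<close>, which stretches \<open>[1, N - 2]\<close> around
  a new adjacent pair \<open>{k, k + 1}\<close>. Every condition defining \<open>Xprime\<close> is invariant under
  \<open>Ik k\<close>: a 0- or 1-cover of an interval by \<open>B\<^sup>1\<close> survives (the new pair is either swallowed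
  by an interval straddling \<open>k\<close> or added as an interval of its own) and can conversely be
  contracted, while the sequence \<open>i\<close> and the element \<open>u\<^sub>B\<close> are simply stretched. The only
  exception is the requirement \<open>N - 1 \<notin> supp B\<close> for \<open>B\<^sup>0 = {}\<close>, which forbids \<open>k = N - 2\<close>.
  Hence the members of \<open>Xprime N\<close> containing an adjacent pair are exactly the insertions of
  members of \<open>Xprime (N - 2)\<close>. A member without adjacent pair has \<open>B\<^sup>1 = {}\<close> (a shortest
  pair of \<open>B\<^sup>1\<close> would enclose a shorter one), so all gaps of \<open>i\<close> are empty and the parity of
  \<open>u\<^sub>B\<close> forces \<open>B\<close> to be a nested family \<open>{{N - 2, 1}, ..., {N - 1 - s, s}}\<close> with \<open>s\<close> odd,
  i.e. a member of \<open>PrP N\<close>.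
\<close>

section \<open>The stretching map\<close>

lemma iota_less_iff [simp]: "iota k a < iota k b \<longleftrightarrow> a < b"
  and iota_le_iff [simp]: "iota k a \<le> iota k b \<longleftrightarrow> a \<le> b"
  and iota_eq_iff [simp]: "iota k a = iota k b \<longleftrightarrow> a = b"
  and iota_neq_pair [simp]: "iota k a \<noteq> k" "iota k a \<noteq> Suc k" "k \<noteq> iota k a" "Suc k \<noteq> iota k a"
  and even_iota_iff [simp]: "even (iota k a) \<longleftrightarrow> even a"
  by (auto simp: iota_def)

lemma iota_0 [simp]: "0 < k \<Longrightarrow> iota k 0 = 0"
  by (simp add: iota_def)

lemma inj_iota: "inj (iota k)"
  by (simp add: inj_def)

lemma mono_iota: "mono (iota k)"
  by (simp add: mono_def)

lemma inj_image_iota: "inj ((`) (iota k))"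
  by (simp add: inj_def inj_image_eq_iff[OF inj_iota])

lemma Min_image_iota: "finite X \<Longrightarrow> X \<noteq> {} \<Longrightarrow> Min (iota k ` X) = iota k (Min X)"
  and Max_image_iota: "finite X \<Longrightarrow> X \<noteq> {} \<Longrightarrow> Max (iota k ` X) = iota k (Max X)"
  by (simp_all add: mono_Min_commute mono_Max_commute mono_iota)

lemma range_iota: "range (iota k) = - {k, Suc k}"
proof -
  have "y \<in> range (iota k)" if "y \<notin> {k, Suc k}" for y
    using that by (intro range_eqI[of _ _ "if y < k then y else y - 2"]) (auto simp: iota_def)
  then show ?thesis by auto
qed

section \<open>Covers under insertion of an adjacent pair\<close>

lemma ivl_image_iota:
  assumes "finite P" "P \<noteq> {}"
  shows "ivl (iota k ` P) =
    iota k ` ivl P \<union> (if Min P < k \<and> k \<le> Max P then {k, Suc k} else {})"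
proof -
  have "ivl (iota k ` P) = {iota k (Min P) .. iota k (Max P)}"
    using assms by (simp add: ivl_def Min_image_iota Max_image_iota)
  moreover have "y \<in> {iota k (Min P) .. iota k (Max P)} \<longleftrightarrow>
      y \<in> iota k ` ivl P \<union> (if Min P < k \<and> k \<le> Max P then {k, Suc k} else {})" for y
  proof (cases "y \<in> {k, Suc k}")
    case True
    then show ?thesis by (auto simp: iota_def)
  next
    case False
    then obtain x where "y = iota k x" using range_iota by blast
    then show ?thesis by (auto simp: ivl_def)
  qed
  ultimately show ?thesis by blast
qed

lemma mem_ivl_image_iota_iff:
  "finite P \<Longrightarrow> P \<noteq> {} \<Longrightarrow> iota k x \<in> ivl (iota k ` P) \<longleftrightarrow> x \<in> ivl P"
  by (simp add: ivl_image_iota inj_image_mem_iff[OF inj_iota])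

lemma pair_mem_ivl_image_iota_iff:
  assumes "finite P" "P \<noteq> {}"
  shows "k \<in> ivl (iota k ` P) \<longleftrightarrow> Min P < k \<and> k \<le> Max P"
    and "Suc k \<in> ivl (iota k ` P) \<longleftrightarrow> Min P < k \<and> k \<le> Max P"
  using assms by (auto simp: ivl_image_iota)

lemma ivl_pair [simp]: "ivl {k, Suc k} = {k, Suc k}"
  by (auto simp: ivl_def)

lemma Ik_eq: "Ik k C = (\<lambda>P. iota k ` P) ` C \<union> {{k, Suc k}}"
  by (simp add: Ik_def)

lemma ivl_image_iota_disjoint:
  assumes "finite P" "P \<noteq> {}" "finite Q" "Q \<noteq> {}" "ivl P \<inter> ivl Q = {}"
  shows "ivl (iota k ` P) \<inter> ivl (iota k ` Q) = {}"
proof -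
  have "\<not> (Min P < k \<and> k \<le> Max P \<and> Min Q < k \<and> k \<le> Max Q)"
    using assms(5) by (auto simp: ivl_def)
  with assms show ?thesis
    by (auto simp: ivl_image_iota inj_image_mem_iff[OF inj_iota])
qed

text \<open>The interval of every member of \<open>Ik k C\<close> contains both or neither of \<open>k\<close> and \<open>Suc k\<close>.\<close>
lemma cov0_Ik_pair_mem:
  assumes C: "\<forall>P\<in>C. finite P \<and> P \<noteq> {}" and cov: "cov0 (Ik k C) Z"
  shows "k \<in> Z \<longleftrightarrow> Suc k \<in> Z"
proof -
  obtain T where T: "T \<subseteq> Ik k C" and Z: "Z = (\<Union>R\<in>T. ivl R)"
    using cov unfolding cov0_def by blast
  have "k \<in> ivl R \<longleftrightarrow> Suc k \<in> ivl R" if "R \<in> Ik k C" for R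
  proof -
    from that consider "R = {k, Suc k}" | P where "P \<in> C" "R = iota k ` P"
      by (auto simp: Ik_eq)
    then show ?thesis
      by cases (use C pair_mem_ivl_image_iota_iff[of _ k] in auto)
  qed
  then show ?thesis using T Z by blast
qed

lemma UN_ivl_image_iota:
  assumes "\<forall>P\<in>S. finite P \<and> P \<noteq> {}"
  shows "(\<Union>P\<in>S. ivl (iota k ` P)) =
    iota k ` (\<Union>P\<in>S. ivl P) \<union> (if \<exists>P\<in>S. Min P < k \<and> k \<le> Max P then {k, Suc k} else {})"
proof -
  have "(\<Union>P\<in>S. ivl (iota k ` P)) =
      (\<Union>P\<in>S. iota k ` ivl P \<union> (if Min P < k \<and> k \<le> Max P then {k, Suc k} else {}))"
    using assms by (simp add: ivl_image_iota)
  then show ?thesis by (auto split: if_splits)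
qed

lemma eq_image_iota_Un_pair:
  assumes pre: "\<And>x. iota k x \<in> Y \<longleftrightarrow> x \<in> X" and pair: "k \<in> Y \<longleftrightarrow> Suc k \<in> Y"
  shows "Y = iota k ` X \<union> (if k \<in> Y then {k, Suc k} else {})"
proof (intro set_eqI iffI)
  fix y assume "y \<in> Y"
  moreover have "y \<in> range (iota k)" if "y \<notin> {k, Suc k}" using that range_iota by blast
  ultimately show "y \<in> iota k ` X \<union> (if k \<in> Y then {k, Suc k} else {})"
    using pre pair by auto
qed (use pre pair in \<open>auto split: if_splits\<close>)

text \<open>The new cover consists of the images of the old intervals, together with the pair
  \<open>{k, Suc k}\<close> itself unless one of these images already contains it.\<close>
lemma cov0_Ik:
  assumes C: "\<forall>P\<in>C. finite P \<and> P \<noteq> {}"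
    and pre: "\<And>x. iota k x \<in> Y \<longleftrightarrow> x \<in> X"
    and pair: "k \<in> Y \<longleftrightarrow> Suc k \<in> Y"
    and straddle: "k - 1 \<in> X \<Longrightarrow> k \<in> X \<Longrightarrow> k \<in> Y"
    and cov: "cov0 C X"
  shows "cov0 (Ik k C) Y"
proof -
  obtain S where S: "S \<subseteq> C" and disj: "\<forall>P\<in>S. \<forall>Q\<in>S. P \<noteq> Q \<longrightarrow> ivl P \<inter> ivl Q = {}"
    and X: "X = (\<Union>P\<in>S. ivl P)"
    using cov unfolding cov0_def by blast
  have finS: "finite P" "P \<noteq> {}" if "P \<in> S" for P using that S C by auto
  define crossed where "crossed \<longleftrightarrow> (\<exists>P\<in>S. Min P < k \<and> k \<le> Max P)"
  define T where "T = (\<lambda>P. iota k ` P) ` S \<union> (if k \<in> Y \<and> \<not> crossed then {{k, Suc k}} else {})"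
  have "T \<subseteq> Ik k C"
    using S by (auto simp: T_def Ik_eq)
  moreover have "\<forall>P\<in>T. \<forall>Q\<in>T. P \<noteq> Q \<longrightarrow> ivl P \<inter> ivl Q = {}"
  proof -
    have "ivl (iota k ` P) \<inter> ivl (iota k ` Q) = {}" if "P \<in> S" "Q \<in> S" "P \<noteq> Q" for P Q
      using that disj finS by (intro ivl_image_iota_disjoint) auto
    moreover have "ivl (iota k ` P) \<inter> {k, Suc k} = {}" if "P \<in> S" "\<not> crossed" for P
      using that finS by (auto simp: crossed_def ivl_image_iota)
    ultimately show ?thesis
      unfolding T_def by (auto simp: Int_commute)
  qed
  moreover have "Y = (\<Union>R\<in>T. ivl R)"
  proof -
    have "(\<Union>P\<in>S. ivl (iota k ` P)) = iota k ` X \<union> (if crossed then {k, Suc k} else {})"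
      unfolding X crossed_def using finS by (intro UN_ivl_image_iota) auto
    moreover have "crossed \<Longrightarrow> k \<in> Y"
      using straddle by (fastforce simp: crossed_def X ivl_def)
    ultimately show ?thesis
      using eq_image_iota_Un_pair[OF pre pair] by (auto simp: T_def)
  qed
  ultimately show ?thesis unfolding cov0_def by blast
qed

lemma cov0_Ik_D:
  assumes C: "\<forall>P\<in>C. finite P \<and> P \<noteq> {}"
    and pre: "\<And>x. iota k x \<in> Y \<longleftrightarrow> x \<in> X"
    and cov: "cov0 (Ik k C) Y"
  shows "cov0 C X"
proof -
  obtain T where T: "T \<subseteq> Ik k C" and disj: "\<forall>P\<in>T. \<forall>Q\<in>T. P \<noteq> Q \<longrightarrow> ivl P \<inter> ivl Q = {}"
    and Y: "Y = (\<Union>R\<in>T. ivl R)"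
    using cov unfolding cov0_def by blast
  define S where "S = {P \<in> C. iota k ` P \<in> T}"
  have "S \<subseteq> C" by (simp add: S_def)
  moreover have "\<forall>P\<in>S. \<forall>Q\<in>S. P \<noteq> Q \<longrightarrow> ivl P \<inter> ivl Q = {}"
  proof (intro ballI impI)
    fix P Q assume PQ: "P \<in> S" "Q \<in> S" "P \<noteq> Q"
    then have "ivl (iota k ` P) \<inter> ivl (iota k ` Q) = {}"
      using disj inj_image_eq_iff[OF inj_iota] by (simp add: S_def)
    then show "ivl P \<inter> ivl Q = {}"
      using PQ C mem_ivl_image_iota_iff[of P k] mem_ivl_image_iota_iff[of Q k]
      unfolding S_def by blast
  qed
  moreover have "X = (\<Union>P\<in>S. ivl P)"
  proof (intro set_eqI iffI)
    fix x assume "x \<in> X"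
    then obtain R where R: "R \<in> T" "iota k x \<in> ivl R" using pre Y by blast
    then obtain P where "P \<in> C" "R = iota k ` P" using T by (auto simp: Ik_eq)
    then show "x \<in> (\<Union>P\<in>S. ivl P)" using R C mem_ivl_image_iota_iff[of P k x] by (auto simp: S_def)
  next
    fix x assume "x \<in> (\<Union>P\<in>S. ivl P)"
    then show "x \<in> X" using pre Y C mem_ivl_image_iota_iff[of _ k x] by (auto simp: S_def)
  qed
  ultimately show ?thesis unfolding cov0_def by blast
qed

lemma cov1_iff_cov0_Diff: "cov1 C X \<longleftrightarrow> (\<exists>u\<in>X. cov0 C (X - {u}))"
proof
  assume "cov1 C X"
  then obtain S u where S: "S \<subseteq> C" and disj: "\<forall>P\<in>S. \<forall>Q\<in>S. P \<noteq> Q \<longrightarrow> ivl P \<inter> ivl Q = {}"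
    and u: "u \<notin> (\<Union>P\<in>S. ivl P)" "X = insert u (\<Union>P\<in>S. ivl P)"
    unfolding cov1_def by (elim exE conjE)
  from u have "X - {u} = (\<Union>P\<in>S. ivl P)" by auto
  with S disj have "cov0 C (X - {u})" unfolding cov0_def by (intro exI[of _ S] conjI)
  then show "\<exists>u\<in>X. cov0 C (X - {u})" using u by blast
next
  assume "\<exists>u\<in>X. cov0 C (X - {u})"
  then obtain u S where u: "u \<in> X" and S: "S \<subseteq> C"
    and disj: "\<forall>P\<in>S. \<forall>Q\<in>S. P \<noteq> Q \<longrightarrow> ivl P \<inter> ivl Q = {}"
    and XS: "X - {u} = (\<Union>P\<in>S. ivl P)"
    unfolding cov0_def by (elim bexE exE conjE)
  from u XS have "u \<notin> (\<Union>P\<in>S. ivl P)" "X = insert u (\<Union>P\<in>S. ivl P)" by auto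
  with S disj show "cov1 C X" unfolding cov1_def by (intro exI[of _ S] exI[of _ u] conjI)
qed

lemma cov1_Ik:
  assumes C: "\<forall>P\<in>C. finite P \<and> P \<noteq> {}"
    and pre: "\<And>x. iota k x \<in> Y \<longleftrightarrow> x \<in> X"
    and pair: "k \<in> Y \<longleftrightarrow> Suc k \<in> Y"
    and straddle: "k - 1 \<in> X \<Longrightarrow> k \<in> X \<Longrightarrow> k \<in> Y"
    and cov: "cov1 C X"
  shows "cov1 (Ik k C) Y"
proof -
  obtain u where u: "u \<in> X" "cov0 C (X - {u})" using cov cov1_iff_cov0_Diff by blast
  have "cov0 (Ik k C) (Y - {iota k u})"
    by (rule cov0_Ik[OF C _ _ _ u(2)]) (use pre pair straddle in auto)
  moreover have "iota k u \<in> Y" using pre u(1) by blast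
  ultimately show ?thesis using cov1_iff_cov0_Diff by blast
qed

lemma cov1_Ik_D:
  assumes C: "\<forall>P\<in>C. finite P \<and> P \<noteq> {}"
    and pre: "\<And>x. iota k x \<in> Y \<longleftrightarrow> x \<in> X"
    and pair: "k \<in> Y \<longleftrightarrow> Suc k \<in> Y"
    and cov: "cov1 (Ik k C) Y"
  shows "cov1 C X"
proof -
  obtain y where y: "y \<in> Y" "cov0 (Ik k C) (Y - {y})" using cov cov1_iff_cov0_Diff by blast
  have "y \<notin> {k, Suc k}"
    using cov0_Ik_pair_mem[OF C y(2)] pair y(1) by auto
  then obtain u where u: "y = iota k u" using range_iota by blast
  have "cov0 C (X - {u})"
    by (rule cov0_Ik_D[OF C _ y(2)]) (use pre u in auto)
  moreover have "u \<in> X" using pre u y(1) by blast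
  ultimately show ?thesis using cov1_iff_cov0_Diff by blast
qed

lemma iota_mem_interval_iff:
  "iota k x \<in> {iota k p + 1 .. iota k q - 1} \<longleftrightarrow> x \<in> {p + 1 .. q - 1}"
  and pair_mem_interval_iff:
  "k \<in> {iota k p + 1 .. iota k q - 1} \<longleftrightarrow> Suc k \<in> {iota k p + 1 .. iota k q - 1}"
  and straddle_mem_interval:
  "k - 1 \<in> {p + 1 .. q - 1} \<Longrightarrow> k \<in> {p + 1 .. q - 1} \<Longrightarrow> k \<in> {iota k p + 1 .. iota k q - 1}"
  by (auto simp: iota_def)

lemma cov0_Ik_interval_iff:
  assumes "\<forall>P\<in>C. finite P \<and> P \<noteq> {}"
  shows "cov0 (Ik k C) {iota k p + 1 .. iota k q - 1} \<longleftrightarrow> cov0 C {p + 1 .. q - 1}"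
  using cov0_Ik[OF assms iota_mem_interval_iff pair_mem_interval_iff straddle_mem_interval]
    cov0_Ik_D[OF assms iota_mem_interval_iff]
  by blast

lemma cov1_Ik_interval_iff:
  assumes "\<forall>P\<in>C. finite P \<and> P \<noteq> {}"
  shows "cov1 (Ik k C) {iota k p + 1 .. iota k q - 1} \<longleftrightarrow> cov1 C {p + 1 .. q - 1}"
  using cov1_Ik[OF assms iota_mem_interval_iff pair_mem_interval_iff straddle_mem_interval]
    cov1_Ik_D[OF assms iota_mem_interval_iff pair_mem_interval_iff]
  by blast

section \<open>Pair sets under insertion\<close>

lemma PM_memD:
  assumes "B \<in> PM M" "X \<in> B"
  shows "finite X" "X \<noteq> {}" "X \<subseteq> {1..M}" "card X = 2"
  using assms by (auto simp: PM_def intro: card_ge_0_finite)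

lemma PM_disjoint: "B \<in> PM M \<Longrightarrow> X \<in> B \<Longrightarrow> Y \<in> B \<Longrightarrow> X \<noteq> Y \<Longrightarrow> X \<inter> Y = {}"
  by (auto simp: PM_def)

lemma B1_finite_nonempty: "B \<in> PM M \<Longrightarrow> \<forall>P\<in>B1 B. finite P \<and> P \<noteq> {}"
  using PM_memD by (auto simp: B1_def)

lemma even_diam_image_iota_iff:
  assumes "finite X" "X \<noteq> {}"
  shows "even (Max (iota k ` X) - Min (iota k ` X)) \<longleftrightarrow> even (Max X - Min X)"
proof -
  have "Min X \<le> Max X" using Min_le[OF assms(1) Max_in[OF assms]] .
  moreover have "Max (iota k ` X) = iota k (Max X)" "Min (iota k ` X) = iota k (Min X)"
    using assms by (simp_all add: Max_image_iota Min_image_iota)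
  ultimately show ?thesis by (auto simp: iota_def)
qed

lemma B1_Ik:
  assumes "B \<in> PM M"
  shows "B1 (Ik k B) = Ik k (B1 B)"
proof -
  have "odd (Max (iota k ` X) - Min (iota k ` X)) \<longleftrightarrow> odd (Max X - Min X)" if "X \<in> B" for X
    using even_diam_image_iota_iff PM_memD(1,2)[OF assms that] by blast
  then show ?thesis unfolding B1_def Ik_eq by auto
qed

lemma B0_Ik:
  assumes "B \<in> PM M"
  shows "B0 (Ik k B) = (\<lambda>X. iota k ` X) ` B0 B"
proof -
  have "even (Max (iota k ` X) - Min (iota k ` X)) \<longleftrightarrow> even (Max X - Min X)" if "X \<in> B" for X
    using even_diam_image_iota_iff PM_memD(1,2)[OF assms that] by blast
  then show ?thesis unfolding B0_def Ik_eq by auto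
qed

lemma card_B0_Ik: "B \<in> PM M \<Longrightarrow> card (B0 (Ik k B)) = card (B0 B)"
  by (simp add: B0_Ik card_image inj_on_subset[OF inj_image_iota])

lemma supp_Ik: "supp (Ik k B) = iota k ` supp B \<union> {k, Suc k}"
  by (auto simp: supp_def Ik_eq)

lemma Ik_in_PM:
  assumes B: "B \<in> PM M" and k: "1 \<le> k" "k \<le> M + 1"
  shows "Ik k B \<in> PM (M + 2)"
  unfolding PM_def Ik_eq
proof (intro CollectI conjI ballI impI)
  show "finite ((\<lambda>X. iota k ` X) ` B \<union> {{k, Suc k}})" using B by (simp add: PM_def)
next
  fix Y assume "Y \<in> (\<lambda>X. iota k ` X) ` B \<union> {{k, Suc k}}"
  moreover have "iota k ` X \<subseteq> {1..M + 2} \<and> card (iota k ` X) = 2" if "X \<in> B" for X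
    using PM_memD[OF B that] card_image[OF inj_on_subset[OF inj_iota]] by (auto simp: iota_def)
  ultimately show "Y \<subseteq> {1..M + 2}" "card Y = 2" using k by auto
next
  fix Y Z assume "Y \<in> (\<lambda>X. iota k ` X) ` B \<union> {{k, Suc k}}" "Z \<in> (\<lambda>X. iota k ` X) ` B \<union> {{k, Suc k}}"
    "Y \<noteq> Z"
  moreover have "iota k ` X \<inter> iota k ` X' = {}" if "X \<in> B" "X' \<in> B" "X \<noteq> X'" for X X'
    using PM_disjoint[OF B that] by (simp add: image_Int[OF inj_iota, symmetric])
  ultimately show "Y \<inter> Z = {}" by auto
qed

lemma PM_adjacent_pair_eq_Ik:
  assumes B: "B \<in> PM M" and pair: "{k, Suc k} \<in> B"
  shows "\<exists>B'\<in>PM (M - 2). B = Ik k B'"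
proof -
  define B' where "B' = (\<lambda>X. iota k -` X) ` (B - {{k, Suc k}})"
  have avoid: "X \<subseteq> range (iota k)" if "X \<in> B - {{k, Suc k}}" for X
    using PM_disjoint[OF B _ pair, of X] that range_iota by auto
  have k: "1 \<le> k" "Suc k \<le> M" using PM_memD(3)[OF B pair] by auto
  have "(\<lambda>X. iota k ` (iota k -` X)) ` (B - {{k, Suc k}}) = (\<lambda>X. X) ` (B - {{k, Suc k}})"
    by (rule image_cong[OF refl]) (use avoid in auto)
  then have "(\<lambda>X. iota k ` X) ` B' = B - {{k, Suc k}}" by (simp add: B'_def image_image)
  then have "Ik k B' = B" using pair by (auto simp: Ik_eq)
  moreover have "B' \<in> PM (M - 2)"
    unfolding PM_def
  proof (intro CollectI conjI ballI impI)
    show "finite B'" using B by (simp add: B'_def PM_def)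
  next
    fix X' assume "X' \<in> B'"
    then obtain X where X: "X \<in> B - {{k, Suc k}}" "X' = iota k -` X" by (auto simp: B'_def)
    show "card X' = 2"
      using X avoid PM_memD(4)[OF B] by (simp add: card_vimage_inj[OF inj_iota])
    show "X' \<subseteq> {1..M - 2}"
    proof
      fix x assume "x \<in> X'"
      then have "iota k x \<in> X" using X(2) by simp
      moreover have "X \<subseteq> {1..M}" using X(1) PM_memD(3)[OF B] by blast
      ultimately have "iota k x \<in> {1..M}" by blast
      then show "x \<in> {1..M - 2}" using k by (auto simp: iota_def split: if_splits)
    qed
  next
    fix X' Y' assume "X' \<in> B'" "Y' \<in> B'" "X' \<noteq> Y'"
    then show "X' \<inter> Y' = {}"
      using PM_disjoint[OF B] by (auto simp: B'_def)
  qed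
  ultimately show ?thesis by blast
qed

section \<open>The conditions of \<open>Xprime\<close> under insertion\<close>

lemma cov0_empty [simp]: "cov0 C {}"
  unfolding cov0_def by (intro exI[of _ "{}"]) simp

definition inner_covered :: "nat set set \<Rightarrow> bool" where
  "inner_covered B \<longleftrightarrow> (\<forall>X\<in>B1 B. cov0 (B1 B) {Min X + 1 .. Max X - 1})"

definition ends_covered :: "nat \<Rightarrow> nat set set \<Rightarrow> nat \<Rightarrow> (nat \<Rightarrow> nat) \<Rightarrow> bool" where
  "ends_covered M B s i \<longleftrightarrow>
     (cov1 (B1 B) {1 .. i 1 - 1} \<and> cov0 (B1 B) {i (2 * s) + 1 .. M - 1})
   \<or> (cov0 (B1 B) {1 .. i 1 - 1} \<and> cov1 (B1 B) {i (2 * s) + 1 .. M - 1})"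

lemma Xprime_iff: "B \<in> Xprime M \<longleftrightarrow>
   B \<in> PM M \<and> inner_covered B \<and> (\<exists>i. seq_ok M B (card (B0 B)) i) \<and> M \<notin> supp B \<and>
   (card (B0 B) = 0 \<or>
    odd (card (B0 B)) \<and> (\<exists>i. seq_ok M B (card (B0 B)) i \<and> ends_covered M B (card (B0 B)) i)) \<and>
   (card (B0 B) = 0 \<and> M - 1 \<notin> supp B \<or>
    card (B0 B) \<ge> 1 \<and> (\<exists>i u. seq_ok M B (card (B0 B)) i \<and> is_uB M B i u \<and> even u))"
  unfolding Xprime_def Xplus_def starP_def ends_covered_def inner_covered_def mem_Collect_eq
  by (simp only: conj_assoc)

lemma inner_covered_Ik_iff:
  assumes B: "B \<in> PM M"
  shows "inner_covered (Ik k B) \<longleftrightarrow> inner_covered B"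
proof -
  have C: "\<forall>P\<in>B1 B. finite P \<and> P \<noteq> {}" using B1_finite_nonempty[OF B] .
  have "cov0 (Ik k (B1 B)) {Min (iota k ` X) + 1 .. Max (iota k ` X) - 1}
      \<longleftrightarrow> cov0 (B1 B) {Min X + 1 .. Max X - 1}" if "X \<in> B1 B" for X
  proof -
    have "finite X" "X \<noteq> {}" using C that by auto
    then have "Min (iota k ` X) = iota k (Min X)" "Max (iota k ` X) = iota k (Max X)"
      by (simp_all add: Min_image_iota Max_image_iota)
    then show ?thesis using cov0_Ik_interval_iff[OF C] by simp
  qed
  then show ?thesis
    unfolding inner_covered_def B1_Ik[OF B] by (auto simp: Ik_eq)
qed

lemma image_doubletons:
  "(\<lambda>X. f ` X) ` {{a j, b j} | j. j \<in> A} = {{f (a j), f (b j)} | j. j \<in> A}"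
proof -
  have "(\<lambda>X. f ` X) ` {{a j, b j} | j. j \<in> A} = (\<lambda>j. f ` {a j, b j}) ` A"
    by (simp add: Setcompr_eq_image image_image)
  then show ?thesis by (simp add: Setcompr_eq_image)
qed

lemma seq_ok_Ik:
  assumes B: "B \<in> PM M" and i: "seq_ok M B s i"
  shows "seq_ok (M + 2) (Ik k B) s (\<lambda>j. iota k (i j))"
proof -
  have C: "\<forall>P\<in>B1 B. finite P \<and> P \<noteq> {}" using B1_finite_nonempty[OF B] .
  from i have s: "s = card (B0 B)"
    and range: "\<forall>j\<in>{1..2 * s}. i j \<in> {1..M}"
    and mono: "strict_mono_on {1..2 * s} i"
    and B0: "B0 B = {{i (2 * s + 1 - j), i j} | j. j \<in> {1..s}}"
    and gaps: "\<forall>j\<in>{1..<s}. cov0 (B1 B) {i j + 1 .. i (j + 1) - 1}"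
      "\<forall>j\<in>{s + 1..<2 * s}. cov0 (B1 B) {i j + 1 .. i (j + 1) - 1}"
    unfolding seq_ok_def by blast+
  show ?thesis
    unfolding seq_ok_def
  proof (intro conjI)
    show "s = card (B0 (Ik k B))" using s card_B0_Ik[OF B] by simp
    show "\<forall>j\<in>{1..2 * s}. iota k (i j) \<in> {1..M + 2}" using range by (auto simp: iota_def)
    show "strict_mono_on {1..2 * s} (\<lambda>j. iota k (i j))"
      using mono by (simp add: strict_mono_on_def)
    show "B0 (Ik k B) = {{iota k (i (2 * s + 1 - j)), iota k (i j)} | j. j \<in> {1..s}}"
      unfolding B0_Ik[OF B] B0 by (rule image_doubletons)
    show "\<forall>j\<in>{1..<s}. cov0 (B1 (Ik k B)) {iota k (i j) + 1 .. iota k (i (j + 1)) - 1}"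
      and "\<forall>j\<in>{s + 1..<2 * s}. cov0 (B1 (Ik k B)) {iota k (i j) + 1 .. iota k (i (j + 1)) - 1}"
      using gaps unfolding B1_Ik[OF B] cov0_Ik_interval_iff[OF C] by blast+
  qed
qed

lemma seq_ok_mem_B0:
  assumes "seq_ok M B s i" "j \<in> {1..2 * s}"
  shows "\<exists>P\<in>B0 B. i j \<in> P"
proof -
  have B0: "B0 B = {{i (2 * s + 1 - j), i j} | j. j \<in> {1..s}}"
    using assms(1) unfolding seq_ok_def by blast
  show ?thesis
  proof (cases "j \<le> s")
    case True
    then have "{i (2 * s + 1 - j), i j} \<in> B0 B" using assms(2) unfolding B0 by auto
    then show ?thesis by blast
  next
    case False
    define j' where "j' = 2 * s + 1 - j"
    have "j' \<in> {1..s}" "2 * s + 1 - j' = j" using assms(2) False by (auto simp: j'_def)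
    then have "{i j, i j'} \<in> B0 B" unfolding B0 by (metis (mono_tags, lifting) mem_Collect_eq)
    then show ?thesis by blast
  qed
qed

lemma seq_ok_Ik_values:
  assumes B: "B \<in> PM M" and i: "seq_ok M' (Ik k B) s i" and j: "j \<in> {1..2 * s}"
  shows "\<exists>x\<in>{1..M}. i j = iota k x"
proof -
  obtain P where "P \<in> B0 B" "i j \<in> iota k ` P"
    using seq_ok_mem_B0[OF i j] unfolding B0_Ik[OF B] by blast
  moreover have "P \<subseteq> {1..M}" using \<open>P \<in> B0 B\<close> PM_memD(3)[OF B] by (auto simp: B0_def)
  ultimately show ?thesis by blast
qed

lemma B0_Ik_eq_doubletons_D:
  fixes i i' :: "nat \<Rightarrow> nat"
  assumes B: "B \<in> PM M"
    and B0: "B0 (Ik k B) = {{i (2 * s + 1 - j), i j} | j. j \<in> {1..s}}"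
    and i: "\<forall>j\<in>{1..2 * s}. i j = iota k (i' j)"
  shows "B0 B = {{i' (2 * s + 1 - j), i' j} | j. j \<in> {1..s}}"
proof -
  have "i (2 * s + 1 - j) = iota k (i' (2 * s + 1 - j)) \<and> i j = iota k (i' j)" if "j \<in> {1..s}" for j
  proof -
    have "j \<in> {1..2 * s}" "2 * s + 1 - j \<in> {1..2 * s}" using that by auto
    then show ?thesis using i by blast
  qed
  then have "{{i (2 * s + 1 - j), i j} | j. j \<in> {1..s}}
      = {{iota k (i' (2 * s + 1 - j)), iota k (i' j)} | j. j \<in> {1..s}}"
    by (metis (no_types, lifting))
  also have "\<dots> = (\<lambda>X. iota k ` X) ` {{i' (2 * s + 1 - j), i' j} | j. j \<in> {1..s}}"
    by (rule image_doubletons[symmetric])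
  finally have "(\<lambda>X. iota k ` X) ` B0 B = (\<lambda>X. iota k ` X) ` {{i' (2 * s + 1 - j), i' j} | j. j \<in> {1..s}}"
    using B0 B0_Ik[OF B] by simp
  then show ?thesis by (simp add: inj_image_eq_iff[OF inj_image_iota])
qed

lemma seq_ok_Ik_D:
  assumes B: "B \<in> PM M" and i: "seq_ok M' (Ik k B) s i"
  shows "\<exists>i'. seq_ok M B s i' \<and> (\<forall>j\<in>{1..2 * s}. i j = iota k (i' j))"
proof -
  have C: "\<forall>P\<in>B1 B. finite P \<and> P \<noteq> {}" using B1_finite_nonempty[OF B] .
  from i have s: "s = card (B0 (Ik k B))"
    and mono: "strict_mono_on {1..2 * s} i"
    and B0: "B0 (Ik k B) = {{i (2 * s + 1 - j), i j} | j. j \<in> {1..s}}"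
    and gaps: "\<forall>j\<in>{1..<s}. cov0 (B1 (Ik k B)) {i j + 1 .. i (j + 1) - 1}"
      "\<forall>j\<in>{s + 1..<2 * s}. cov0 (B1 (Ik k B)) {i j + 1 .. i (j + 1) - 1}"
    unfolding seq_ok_def by blast+
  obtain i' where i': "\<And>j. j \<in> {1..2 * s} \<Longrightarrow> i' j \<in> {1..M} \<and> i j = iota k (i' j)"
    using seq_ok_Ik_values[OF B i] by metis
  have gap: "cov0 (B1 B) {i' j + 1 .. i' (j + 1) - 1}"
    if "j \<in> {1..<2 * s}" "cov0 (B1 (Ik k B)) {i j + 1 .. i (j + 1) - 1}" for j
  proof -
    have "j \<in> {1..2 * s}" "j + 1 \<in> {1..2 * s}" using that(1) by auto
    then have "i j = iota k (i' j)" "i (j + 1) = iota k (i' (j + 1))" using i' by blast+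
    with that(2) show ?thesis unfolding B1_Ik[OF B] by (simp only: cov0_Ik_interval_iff[OF C])
  qed
  have "seq_ok M B s i'"
    unfolding seq_ok_def
  proof (intro conjI)
    show "s = card (B0 B)" using s card_B0_Ik[OF B] by simp
    show "\<forall>j\<in>{1..2 * s}. i' j \<in> {1..M}" using i' by blast
    show "strict_mono_on {1..2 * s} i'"
      using mono i' by (auto simp: strict_mono_on_def)
    show "B0 B = {{i' (2 * s + 1 - j), i' j} | j. j \<in> {1..s}}"
      using B0_Ik_eq_doubletons_D[OF B B0] i' by blast
    show "\<forall>j\<in>{1..<s}. cov0 (B1 B) {i' j + 1 .. i' (j + 1) - 1}"
      and "\<forall>j\<in>{s + 1..<2 * s}. cov0 (B1 B) {i' j + 1 .. i' (j + 1) - 1}"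
      by (intro ballI gap; use gaps in force)+
  qed
  then show ?thesis using i' by blast
qed

lemma ex_seq_ok_Ik_iff:
  assumes B: "B \<in> PM M"
    and P: "\<And>i i'. \<forall>j\<in>{1..2 * s}. i j = i' j \<Longrightarrow> P i \<longleftrightarrow> P i'"
  shows "(\<exists>i. seq_ok (M + 2) (Ik k B) s i \<and> P i) \<longleftrightarrow> (\<exists>i. seq_ok M B s i \<and> P (\<lambda>j. iota k (i j)))"
proof
  assume "\<exists>i. seq_ok (M + 2) (Ik k B) s i \<and> P i"
  then obtain i where "seq_ok (M + 2) (Ik k B) s i" "P i" by blast
  moreover obtain i' where "seq_ok M B s i'" "\<forall>j\<in>{1..2 * s}. i j = iota k (i' j)"
    using seq_ok_Ik_D[OF B \<open>seq_ok (M + 2) (Ik k B) s i\<close>] by blast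
  moreover have "P i \<longleftrightarrow> P (\<lambda>j. iota k (i' j))"
    using P[of i "\<lambda>j. iota k (i' j)"] \<open>\<forall>j\<in>{1..2 * s}. i j = iota k (i' j)\<close> by blast
  ultimately show "\<exists>i. seq_ok M B s i \<and> P (\<lambda>j. iota k (i j))" by blast
qed (use seq_ok_Ik[OF B] in blast)

text \<open>The boundary intervals \<open>[1, a - 1]\<close> and \<open>[b + 1, M - 1]\<close> in the shape required by
  \<open>cov0_Ik_interval_iff\<close>.\<close>
lemma interval_from_1_iota: "0 < k \<Longrightarrow> {1 .. iota k a - 1} = {iota k 0 + 1 .. iota k a - 1}"
  by simp

lemma interval_to_top_iota: "k \<le> M \<Longrightarrow> {iota k b + 1 .. M + 2 - 1} = {iota k b + 1 .. iota k M - 1}"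
  by (simp add: iota_def)

lemma ends_covered_Ik_iff:
  assumes B: "B \<in> PM M" and k: "1 \<le> k" "k \<le> M"
  shows "ends_covered (M + 2) (Ik k B) s (\<lambda>j. iota k (i j)) \<longleftrightarrow> ends_covered M B s i"
proof -
  have C: "\<forall>P\<in>B1 B. finite P \<and> P \<noteq> {}" using B1_finite_nonempty[OF B] .
  have k0: "0 < k" using k by simp
  show ?thesis
    unfolding ends_covered_def B1_Ik[OF B] interval_from_1_iota[OF k0] interval_to_top_iota[OF k(2)]
      cov0_Ik_interval_iff[OF C] cov1_Ik_interval_iff[OF C]
    using k by simp
qed

lemma is_uB_Ik_iff:
  assumes B: "B \<in> PM M" and k: "1 \<le> k" "k \<le> M"
  shows "is_uB (M + 2) (Ik k B) (\<lambda>j. iota k (i j)) (iota k u) \<longleftrightarrow> is_uB M B i u"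
proof -
  have C: "\<forall>P\<in>B1 B. finite P \<and> P \<noteq> {}" using B1_finite_nonempty[OF B] .
  have k0: "0 < k" using k by simp
  show ?thesis
    unfolding is_uB_def Let_def card_B0_Ik[OF B] B1_Ik[OF B] interval_from_1_iota[OF k0]
      interval_to_top_iota[OF k(2)] iota_mem_interval_iff
      cov0_Ik_interval_iff[OF C] cov1_Ik_interval_iff[OF C]
    using k by simp
qed

lemma split_point_not_pair:
  assumes C: "\<forall>P\<in>C. finite P \<and> P \<noteq> {}"
    and cov: "cov0 (Ik k C) {a .. u - 1}" "cov0 (Ik k C) {u + 1 .. b}"
    and u: "u \<in> {a..b}" and pair: "k \<in> {a..b} \<longleftrightarrow> Suc k \<in> {a..b}"
  shows "u \<notin> {k, Suc k}"
proof -
  have "k \<in> {a .. u - 1} \<longleftrightarrow> Suc k \<in> {a .. u - 1}" "k \<in> {u + 1 .. b} \<longleftrightarrow> Suc k \<in> {u + 1 .. b}"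
    using cov0_Ik_pair_mem[OF C cov(1)] cov0_Ik_pair_mem[OF C cov(2)] .
  then show ?thesis using u pair by auto
qed

lemma is_uB_Ik_not_pair:
  assumes B: "B \<in> PM M" and k: "1 \<le> k" "k \<le> M"
    and u: "is_uB (M + 2) (Ik k B) (\<lambda>j. iota k (i j)) u"
  shows "u \<notin> {k, Suc k}"
proof -
  have C: "\<forall>P\<in>B1 B. finite P \<and> P \<noteq> {}" using B1_finite_nonempty[OF B] .
  let ?a = "iota k (i 1)" and ?b = "iota k (i (2 * card (B0 B)))"
  from u consider
      "u \<in> {1 .. ?a - 1}" "cov0 (Ik k (B1 B)) {1 .. u - 1}" "cov0 (Ik k (B1 B)) {u + 1 .. ?a - 1}"
    | "u \<in> {?b + 1 .. M + 2 - 1}" "cov0 (Ik k (B1 B)) {?b + 1 .. u - 1}"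
      "cov0 (Ik k (B1 B)) {u + 1 .. M + 2 - 1}"
    unfolding is_uB_def Let_def card_B0_Ik[OF B] B1_Ik[OF B] by blast
  then show ?thesis
  proof cases
    case 1
    have "k \<in> {1 .. ?a - 1} \<longleftrightarrow> Suc k \<in> {1 .. ?a - 1}"
      using pair_mem_interval_iff[of k 0 "i 1"] k by simp
    from split_point_not_pair[OF C 1(2,3,1) this] show ?thesis .
  next
    case 2
    have "k \<in> {?b + 1 .. M + 2 - 1} \<longleftrightarrow> Suc k \<in> {?b + 1 .. M + 2 - 1}"
      using pair_mem_interval_iff[of k "i (2 * card (B0 B))" M] k by (simp add: iota_def)
    from split_point_not_pair[OF C 2(2,3,1) this] show ?thesis .
  qed
qed

lemma ex_even_is_uB_Ik_iff:
  assumes B: "B \<in> PM M" and k: "1 \<le> k" "k \<le> M"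
  shows "(\<exists>u. is_uB (M + 2) (Ik k B) (\<lambda>j. iota k (i j)) u \<and> even u) \<longleftrightarrow>
    (\<exists>u. is_uB M B i u \<and> even u)"
proof
  assume "\<exists>u. is_uB (M + 2) (Ik k B) (\<lambda>j. iota k (i j)) u \<and> even u"
  then obtain u where u: "is_uB (M + 2) (Ik k B) (\<lambda>j. iota k (i j)) u" "even u" by blast
  then obtain u' where "u = iota k u'"
    using is_uB_Ik_not_pair[OF B k] range_iota by blast
  then show "\<exists>u. is_uB M B i u \<and> even u" using u is_uB_Ik_iff[OF B k] by auto
next
  assume "\<exists>u. is_uB M B i u \<and> even u"
  then obtain u where "is_uB M B i u" "even u" by blast
  then show "\<exists>u. is_uB (M + 2) (Ik k B) (\<lambda>j. iota k (i j)) u \<and> even u"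
    using is_uB_Ik_iff[OF B k, of i u] by (intro exI[of _ "iota k u"]) simp
qed

lemma top_notin_supp_Ik_iff:
  assumes "k \<le> M"
  shows "M + 2 \<notin> supp (Ik k B) \<longleftrightarrow> M \<notin> supp B"
proof -
  have "M + 2 = iota k M" using assms by (simp add: iota_def)
  then show ?thesis unfolding supp_Ik by (simp add: inj_image_mem_iff[OF inj_iota])
qed

lemma below_top_notin_supp_Ik_iff:
  assumes "1 \<le> k" "k \<le> M"
  shows "M + 2 - 1 \<notin> supp (Ik k B) \<longleftrightarrow> M - 1 \<notin> supp B \<and> k < M"
proof (cases "k = M")
  case False
  then have "M + 2 - 1 = iota k (M - 1)" using assms by (simp add: iota_def)
  then show ?thesis
    using False assms by (simp add: supp_Ik inj_image_mem_iff[OF inj_iota])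
qed (simp add: supp_Ik)

lemma ends_covered_cong:
  "1 \<le> s \<Longrightarrow> \<forall>j\<in>{1..2 * s}. i j = i' j \<Longrightarrow> ends_covered M B s i \<longleftrightarrow> ends_covered M B s i'"
  by (simp add: ends_covered_def)

lemma is_uB_cong:
  "1 \<le> card (B0 B) \<Longrightarrow> \<forall>j\<in>{1..2 * card (B0 B)}. i j = i' j \<Longrightarrow> is_uB M B i u \<longleftrightarrow> is_uB M B i' u"
  by (simp add: is_uB_def)

text \<open>The side condition: for \<open>B\<^sup>0 = {}\<close> the pair inserted at \<open>k = M\<close> occupies \<open>M + 1\<close>.\<close>
lemma Ik_in_Xprime_iff:
  assumes B: "B \<in> PM M" and k: "1 \<le> k" "k \<le> M"
  shows "Ik k B \<in> Xprime (M + 2) \<longleftrightarrow> B \<in> Xprime M \<and> (card (B0 B) = 0 \<longrightarrow> k < M)"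
proof -
  define s where "s = card (B0 B)"
  have card: "card (B0 (Ik k B)) = s" using card_B0_Ik[OF B] by (simp add: s_def)
  have seq: "(\<exists>i. seq_ok (M + 2) (Ik k B) s i) \<longleftrightarrow> (\<exists>i. seq_ok M B s i)"
    using ex_seq_ok_Ik_iff[OF B, of s "\<lambda>_. True" k] by simp
  have ends: "(\<exists>i. seq_ok (M + 2) (Ik k B) s i \<and> ends_covered (M + 2) (Ik k B) s i) \<longleftrightarrow>
      (\<exists>i. seq_ok M B s i \<and> ends_covered M B s i)" if "1 \<le> s"
    using ex_seq_ok_Ik_iff[OF B, of s "ends_covered (M + 2) (Ik k B) s" k]
      ends_covered_cong[OF that] ends_covered_Ik_iff[OF B k]
    by simp
  have uB: "(\<exists>i u. seq_ok (M + 2) (Ik k B) s i \<and> is_uB (M + 2) (Ik k B) i u \<and> even u) \<longleftrightarrow>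
      (\<exists>i u. seq_ok M B s i \<and> is_uB M B i u \<and> even u)" if "1 \<le> s"
  proof -
    have "(\<exists>u. is_uB (M + 2) (Ik k B) i u \<and> even u) \<longleftrightarrow> (\<exists>u. is_uB (M + 2) (Ik k B) i' u \<and> even u)"
      if "\<forall>j\<in>{1..2 * s}. i j = i' j" for i i'
      using is_uB_cong[of "Ik k B" i i'] card \<open>1 \<le> s\<close> that by simp
    then have "(\<exists>i. seq_ok (M + 2) (Ik k B) s i \<and> (\<exists>u. is_uB (M + 2) (Ik k B) i u \<and> even u)) \<longleftrightarrow>
        (\<exists>i. seq_ok M B s i \<and> (\<exists>u. is_uB (M + 2) (Ik k B) (\<lambda>j. iota k (i j)) u \<and> even u))"
      by (rule ex_seq_ok_Ik_iff[OF B])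
    then show ?thesis using ex_even_is_uB_Ik_iff[OF B k] by simp
  qed
  show ?thesis
    unfolding Xprime_iff card s_def[symmetric]
    using Ik_in_PM[OF B k(1)] k inner_covered_Ik_iff[OF B] seq ends uB
      top_notin_supp_Ik_iff[OF k(2)] below_top_notin_supp_Ik_iff[OF k] B
    by auto
qed

section \<open>Pair sets without adjacent pairs\<close>

lemma cov0_no_pairs [simp]: "cov0 {} X \<longleftrightarrow> X = {}"
  by (auto simp: cov0_def)

lemma cov1_no_pairs [simp]: "cov1 {} X \<longleftrightarrow> (\<exists>u. X = {u})"
  by (auto simp: cov1_iff_cov0_Diff)

definition rainbow :: "nat \<Rightarrow> nat \<Rightarrow> nat set set" where
  "rainbow N s = (\<lambda>j. {N - 1 - j, j}) ` {1..s}"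

lemma rainbow_eq_Setcompr: "{{N - 1 - j, j} | j. j \<in> {1..s}} = rainbow N s"
  unfolding rainbow_def by (rule Setcompr_eq_image)

lemma mem_PrP_iff:
  assumes "odd N"
  shows "B \<in> PrP N \<longleftrightarrow> B = {} \<or> (\<exists>s. odd s \<and> 2 * s + 2 \<le> N \<and> B = rainbow N s)"
proof -
  obtain m where N: "N = 2 * m + 1" using assms oddE by blast
  have "(\<exists>\<tau>. B = {{N - 1 - j, j} | j. j \<in> {1..\<tau> - 1}} \<and> even \<tau> \<and> \<tau> \<in> {2..(N - 1) div 2}) \<longleftrightarrow>
      (\<exists>s. odd s \<and> 2 * s + 2 \<le> N \<and> B = rainbow N s)"
  proof
    assume "\<exists>\<tau>. B = {{N - 1 - j, j} | j. j \<in> {1..\<tau> - 1}} \<and> even \<tau> \<and> \<tau> \<in> {2..(N - 1) div 2}"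
    then obtain \<tau> where "B = rainbow N (\<tau> - 1)" "even \<tau>" "\<tau> \<in> {2..(N - 1) div 2}"
      unfolding rainbow_eq_Setcompr by blast
    then show "\<exists>s. odd s \<and> 2 * s + 2 \<le> N \<and> B = rainbow N s"
      using N by (intro exI[of _ "\<tau> - 1"]) auto
  next
    assume "\<exists>s. odd s \<and> 2 * s + 2 \<le> N \<and> B = rainbow N s"
    then obtain s where "odd s" "2 * s + 2 \<le> N" "B = rainbow N s" by blast
    then show "\<exists>\<tau>. B = {{N - 1 - j, j} | j. j \<in> {1..\<tau> - 1}} \<and> even \<tau> \<and> \<tau> \<in> {2..(N - 1) div 2}"
      unfolding rainbow_eq_Setcompr using N by (intro exI[of _ "s + 1"]) (auto elim: oddE)
  qed
  then show ?thesis by (simp add: PrP_def)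
qed

lemma rainbow_in_PM:
  assumes "2 * s + 2 \<le> N"
  shows "rainbow N s \<in> PM N"
  unfolding PM_def rainbow_def
proof (intro CollectI conjI ballI impI)
  fix X assume "X \<in> (\<lambda>j. {N - 1 - j, j}) ` {1..s}"
  then show "X \<subseteq> {1..N}" "card X = 2" using assms by auto
next
  fix X Y assume "X \<in> (\<lambda>j. {N - 1 - j, j}) ` {1..s}" "Y \<in> (\<lambda>j. {N - 1 - j, j}) ` {1..s}" "X \<noteq> Y"
  then show "X \<inter> Y = {}" using assms by auto
qed simp

lemma rainbow_B0_B1:
  assumes "odd N" "2 * s + 2 \<le> N"
  shows "B0 (rainbow N s) = rainbow N s" "B1 (rainbow N s) = {}"
proof -
  have "even (Max X - Min X)" if "X \<in> rainbow N s" for X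
    using that assms by (auto simp: rainbow_def)
  then show "B0 (rainbow N s) = rainbow N s" "B1 (rainbow N s) = {}"
    by (auto simp: B0_def B1_def)
qed

lemma card_rainbow: "2 * s + 2 \<le> N \<Longrightarrow> card (rainbow N s) = s"
  unfolding rainbow_def by (subst card_image) (auto simp: inj_on_def doubleton_eq_iff)

lemma seq_ok_rainbow:
  assumes "odd N" "2 * s + 2 \<le> N"
  shows "seq_ok N (rainbow N s) s (\<lambda>j. if j \<le> s then j else N - 2 - 2 * s + j)"
  unfolding seq_ok_def rainbow_B0_B1[OF assms] card_rainbow[OF assms(2)]
proof (intro conjI)
  let ?i = "\<lambda>j. if j \<le> s then j else N - 2 - 2 * s + j"
  show "rainbow N s = {{?i (2 * s + 1 - j), ?i j} | j. j \<in> {1..s}}"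
    unfolding rainbow_eq_Setcompr[symmetric] using assms(2)
    by (intro Collect_cong ex_cong1) auto
qed (use assms(2) in \<open>auto simp: strict_mono_on_def\<close>)

lemma rainbow_in_Xprime:
  assumes "odd N" "odd s" "2 * s + 2 \<le> N"
  shows "rainbow N s \<in> Xprime N"
proof -
  let ?B = "rainbow N s" and ?i = "\<lambda>j. if j \<le> s then j else N - 2 - 2 * s + j"
  have s: "1 \<le> s" using assms(2) by (cases s) auto
  note B0 = rainbow_B0_B1[OF assms(1,3)] and card = card_rainbow[OF assms(3)]
  note seq = seq_ok_rainbow[OF assms(1,3)]
  have "ends_covered N ?B s ?i"
    using s assms(3) by (simp add: ends_covered_def B0)
  moreover have "\<exists>i u. seq_ok N ?B s i \<and> is_uB N ?B i u \<and> even u"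
  proof (intro exI conjI)
    show "is_uB N ?B ?i (N - 1)" using s assms(3) by (auto simp: is_uB_def B0 card)
  qed (use seq assms(1) in auto)
  moreover have "inner_covered ?B" by (simp add: inner_covered_def B0)
  moreover have "N \<notin> supp ?B" using assms(3) by (auto simp: supp_def rainbow_def)
  ultimately show ?thesis
    unfolding Xprime_iff B0 card using rainbow_in_PM[OF assms(3)] seq assms s by blast
qed

lemma cov0_mem_ivl:
  assumes "cov0 C X" "x \<in> X"
  shows "\<exists>P\<in>C. x \<in> ivl P \<and> ivl P \<subseteq> X"
  using assms unfolding cov0_def by blast

text \<open>A pair of \<open>B\<^sup>1\<close> of minimal length must be adjacent: its interior is covered by shorter pairs.\<close>
lemma B1_empty_if_no_adjacent_pair:
  assumes B: "B \<in> PM M" and inner: "inner_covered B" and no_adj: "\<forall>k. {k, Suc k} \<notin> B"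
  shows "B1 B = {}"
proof (rule ccontr)
  assume "B1 B \<noteq> {}"
  then obtain X where X: "X \<in> B1 B" and least: "\<And>Y. Y \<in> B1 B \<Longrightarrow> Max X - Min X \<le> Max Y - Min Y"
    using ex_has_least_nat[of "\<lambda>X. X \<in> B1 B" _ "\<lambda>X. Max X - Min X"] by blast
  have "X \<in> B" using X by (simp add: B1_def)
  then obtain a b where ab: "X = {a, b}" "a < b"
    using PM_memD(4)[OF B] by (auto simp: card_2_iff) (metis insert_commute linorder_neqE_nat)
  then have "b \<noteq> Suc a" using no_adj \<open>X \<in> B\<close> by blast
  then have "a + 1 \<in> {Min X + 1 .. Max X - 1}" using ab by auto
  moreover have "cov0 (B1 B) {Min X + 1 .. Max X - 1}" using inner X by (simp add: inner_covered_def)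
  ultimately obtain P where P: "P \<in> B1 B" "ivl P \<subseteq> {Min X + 1 .. Max X - 1}"
    using cov0_mem_ivl by blast
  have "finite P" "P \<noteq> {}" using P(1) B1_finite_nonempty[OF B] by auto
  then have "Min P \<in> ivl P" "Max P \<in> ivl P" by (auto simp: ivl_def)
  then have "Min P \<in> {a + 1 .. b - 1}" "Max P \<in> {a + 1 .. b - 1}" using P(2) ab by auto
  then have "Max P - Min P < Max X - Min X" using ab by auto
  with least[OF P(1)] show False by simp
qed

lemma strict_mono_on_unit_steps:
  fixes f :: "nat \<Rightarrow> nat"
  assumes mono: "strict_mono_on {a..b} f" and steps: "\<forall>j\<in>{a..<b}. f (j + 1) \<le> f j + 1"
  shows "j \<in> {a..b} \<Longrightarrow> f j = f a + (j - a)"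
proof (induction j)
  case (Suc j)
  show ?case
  proof (cases "Suc j = a")
    case False
    with Suc.prems have j: "j \<in> {a..<b}" by auto
    then have "f j < f (Suc j)" using mono by (auto simp: strict_mono_on_def)
    with j steps Suc.IH show ?thesis by fastforce
  qed simp
qed simp

lemma is_uB_without_B1:
  assumes "is_uB N B i u" "B1 B = {}" "even u"
  shows "i 1 \<le> 1 \<and> i (2 * card (B0 B)) = N - 2"
  using assms by (auto simp: is_uB_def Let_def)

lemma B0_eq_rainbow_without_B1:
  assumes i: "seq_ok N B s i" and B1: "B1 B = {}" and s: "1 \<le> s"
    and ends: "i 1 = 1" "i (2 * s) = N - 2"
  shows "B0 B = rainbow N s \<and> 2 * s + 2 \<le> N"
proof -
  from i have mono: "strict_mono_on {1..2 * s} i"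
    and B0: "B0 B = {{i (2 * s + 1 - j), i j} | j. j \<in> {1..s}}"
    and gaps: "\<forall>j\<in>{1..<s}. cov0 (B1 B) {i j + 1 .. i (j + 1) - 1}"
      "\<forall>j\<in>{s + 1..<2 * s}. cov0 (B1 B) {i j + 1 .. i (j + 1) - 1}"
    unfolding seq_ok_def by blast+
  have steps: "i (j + 1) \<le> i j + 1" if "cov0 (B1 B) {i j + 1 .. i (j + 1) - 1}" for j
    using that B1 by simp
  have mono_halves: "strict_mono_on {1..s} i" "strict_mono_on {s + 1..2 * s} i"
    by (rule monotone_on_subset[OF mono]; auto)+
  have steps_halves: "\<forall>j\<in>{1..<s}. i (j + 1) \<le> i j + 1" "\<forall>j\<in>{s + 1..<2 * s}. i (j + 1) \<le> i j + 1"
    using gaps steps by blast+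
  have left: "i j = j" if "j \<in> {1..s}" for j
    using strict_mono_on_unit_steps[OF mono_halves(1) steps_halves(1) that] ends(1) that by simp
  have right: "i j = i (s + 1) + (j - (s + 1))" if "j \<in> {s + 1..2 * s}" for j
    using strict_mono_on_unit_steps[OF mono_halves(2) steps_halves(2) that] .
  have "i (s + 1) = N - 1 - s" using right[of "2 * s"] ends(2) s by auto
  moreover have "i s < i (s + 1)" using mono s by (auto simp: strict_mono_on_def)
  ultimately have N: "2 * s + 2 \<le> N" using left[of s] s by auto
  have mirror: "i (2 * s + 1 - j) = N - 1 - j" if "j \<in> {1..s}" for j
  proof -
    have "2 * s + 1 - j \<in> {s + 1..2 * s}" using that by auto
    from right[OF this] show ?thesis using \<open>i (s + 1) = N - 1 - s\<close> N that by auto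
  qed
  have "B0 B = rainbow N s"
    unfolding B0 rainbow_eq_Setcompr[symmetric] using left mirror by (intro Collect_cong ex_cong1) auto
  with N show ?thesis by blast
qed

lemma Xprime_no_adjacent_pair:
  assumes X: "B \<in> Xprime N" and no_adj: "\<forall>k. {k, Suc k} \<notin> B"
  shows "B = {} \<or> (\<exists>s. odd s \<and> 2 * s + 2 \<le> N \<and> B = rainbow N s)"
proof -
  define s where "s = card (B0 B)"
  have B: "B \<in> PM N" and inner: "inner_covered B" using X by (simp_all add: Xprime_iff)
  have B1: "B1 B = {}" using B1_empty_if_no_adjacent_pair[OF B inner no_adj] .
  then have B0: "B0 B = B" by (auto simp: B0_def B1_def)
  show ?thesis
  proof (cases "s = 0")
    case True
    have "finite B" using B by (simp add: PM_def)
    then show ?thesis using True B0 by (simp add: s_def)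
  next
    case False
    have "odd s" using X False unfolding Xprime_iff s_def[symmetric] by blast
    obtain i u where "seq_ok N B s i" "is_uB N B i u" "even u"
      using X False unfolding Xprime_iff s_def[symmetric] by blast
    moreover have "i 1 \<in> {1..N}"
    proof -
      have "\<forall>j\<in>{1..2 * s}. i j \<in> {1..N}" using \<open>seq_ok N B s i\<close> unfolding seq_ok_def by blast
      then show ?thesis using False by simp
    qed
    ultimately have "i 1 = 1" "i (2 * s) = N - 2"
      using is_uB_without_B1[OF \<open>is_uB N B i u\<close> B1 \<open>even u\<close>] by (auto simp: s_def)
    then show ?thesis
      using B0_eq_rainbow_without_B1[OF \<open>seq_ok N B s i\<close> B1] False \<open>odd s\<close> B0 by auto
  qed
qed

section \<open>The recursion\<close>

lemma B0_B1_empty [simp]: "B0 {} = {}" "B1 {} = {}"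
  by (simp_all add: B0_def B1_def)

lemma empty_in_Xprime: "1 \<le> N \<Longrightarrow> {} \<in> Xprime N"
proof -
  have "seq_ok N {} 0 id" by (simp add: seq_ok_def)
  moreover have "{} \<in> PM N" "inner_covered {}" "supp {} = {}"
    by (simp_all add: PM_def inner_covered_def supp_def)
  ultimately show ?thesis unfolding Xprime_iff by auto
qed

lemma PM_1: "PM 1 = {{}}"
proof -
  have "B = {}" if "B \<in> PM 1" for B
  proof -
    have "card X \<le> 1" if "X \<in> B" for X
      using card_mono[OF _ PM_memD(3)[OF \<open>B \<in> PM 1\<close> that]] by simp
    then show ?thesis using PM_memD(4)[OF that] by fastforce
  qed
  moreover have "{} \<in> PM 1" by (simp add: PM_def)
  ultimately show ?thesis by blast
qed

lemma Xprime_subset_PM: "Xprime M \<subseteq> PM M"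
  by (auto simp: Xprime_def Xplus_def starP_def)

lemma PrP_subset_Xprime:
  assumes "odd N"
  shows "PrP N \<subseteq> Xprime N"
proof
  fix B assume "B \<in> PrP N"
  then consider "B = {}" | s where "odd s" "2 * s + 2 \<le> N" "B = rainbow N s"
    using mem_PrP_iff[OF assms] by blast
  then show "B \<in> Xprime N"
    by cases (use empty_in_Xprime odd_pos[OF assms] rainbow_in_Xprime[OF assms] in auto)
qed

lemma Xprime_adjacent_pair_eq_Ik:
  assumes X: "B \<in> Xprime N" and pair: "{k, Suc k} \<in> B"
  shows "k \<in> {1..N - 2} \<and> (card (B0 B) = 0 \<longrightarrow> k < N - 2) \<and> (\<exists>B'\<in>Xprime (N - 2). B = Ik k B')"
proof -
  have B: "B \<in> PM N" and top: "N \<notin> supp B" using X by (simp_all add: Xprime_iff)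
  have "Suc k \<noteq> N" using top pair by (auto simp: supp_def)
  then have k: "1 \<le> k" "k \<le> N - 2" using PM_memD(3)[OF B pair] by auto
  obtain B' where B': "B' \<in> PM (N - 2)" "B = Ik k B'"
    using PM_adjacent_pair_eq_Ik[OF B pair] by blast
  have "N - 2 + 2 = N" using k by simp
  then have "B' \<in> Xprime (N - 2) \<and> (card (B0 B') = 0 \<longrightarrow> k < N - 2)"
    using Ik_in_Xprime_iff[OF B'(1) k] X B'(2) by simp
  then show ?thesis using k B' card_B0_Ik[OF B'(1)] by auto
qed

lemma Xprime_eq_insertions:
  assumes N: "odd N" "3 \<le> N"
  shows "Xprime N = {B \<in> PM N. B \<in> PrP N
    \<or> (card (B0 B) > 0 \<and> (\<exists>k\<in>{1..N - 2}. \<exists>B'\<in>Xprime (N - 2). B = Ik k B'))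
    \<or> (card (B0 B) = 0 \<and> (\<exists>k\<in>{1..N - 3}. \<exists>B'\<in>Xprime (N - 2). B = Ik k B'))}"
    (is "_ = ?R")
proof
  show "Xprime N \<subseteq> ?R"
  proof
    fix B assume X: "B \<in> Xprime N"
    then have B: "B \<in> PM N" by (simp add: Xprime_iff)
    show "B \<in> ?R"
    proof (cases "\<exists>k. {k, Suc k} \<in> B")
      case True
      then obtain k where "{k, Suc k} \<in> B" by blast
      from Xprime_adjacent_pair_eq_Ik[OF X this] show ?thesis using B by auto
    next
      case False
      then have "B \<in> PrP N" using Xprime_no_adjacent_pair[OF X] mem_PrP_iff[OF N(1)] by auto
      then show ?thesis using B by blast
    qed
  qed
  show "?R \<subseteq> Xprime N"
  proof
    fix B assume "B \<in> ?R"
    then consider (Pr) "B \<in> PrP N"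
      | (Ins) k B' where "k \<in> {1..N - 2}" "B' \<in> Xprime (N - 2)" "B = Ik k B'"
          "card (B0 B) = 0 \<Longrightarrow> k < N - 2"
      by fastforce
    then show "B \<in> Xprime N"
    proof cases
      case Pr
      then show ?thesis using PrP_subset_Xprime[OF N(1)] by blast
    next
      case Ins
      have B': "B' \<in> PM (N - 2)" using Ins(2) Xprime_subset_PM by blast
      have "N - 2 + 2 = N" using N(2) by simp
      then show ?thesis using Ins Ik_in_Xprime_iff[OF B', of k] card_B0_Ik[OF B'] by auto
    qed
  qed
qed

lemma Xprime_3: "Xprime 3 = {{}}"
proof -
  have X1: "Xprime (3 - 2) = {{}}" using Xprime_subset_PM[of 1] PM_1 empty_in_Xprime[of 1] by auto
  have "B = {}" if "B \<in> Xprime 3" for B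
  proof -
    have "odd (3::nat)" by simp
    from that have "B \<in> PrP 3 \<or> (card (B0 B) > 0 \<and> (\<exists>k\<in>{1..3 - 2}. B = Ik k {}))
        \<or> (card (B0 B) = 0 \<and> (\<exists>k\<in>{1..3 - 3::nat}. B = Ik k {}))"
      unfolding Xprime_eq_insertions[OF \<open>odd 3\<close> order_refl] X1 by blast
    then have "B \<in> PrP 3 \<or> card (B0 B) > 0 \<and> B = Ik 1 {}" by simp
    moreover have "card (B0 (Ik 1 {})) = 0" using card_B0_Ik[of "{}" 1 1] PM_1 by simp
    moreover have "\<not> (odd s \<and> 2 * s + 2 \<le> (3::nat))" for s by (cases s) auto
    ultimately show ?thesis using mem_PrP_iff[of 3] by auto
  qed
  then show ?thesis using empty_in_Xprime[of 3] by auto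
qed

theorem theorem4p3:
  fixes N :: nat
  assumes "odd N" and "3 \<le> N"
  shows "Xprime N = sharpX N"
  using assms
proof (induction N rule: less_induct)
  case (less N)
  show ?case
  proof (cases "N < 5")
    case True
    then have "N = 3" using less.prems by presburger
    then show ?thesis by (simp add: Xprime_3)
  next
    case False
    then have "Xprime (N - 2) = sharpX (N - 2)" using less by (intro less.IH) auto
    then show ?thesis
      using Xprime_eq_insertions[OF less.prems] False by (subst sharpX.simps) simp
  qed
qed

end
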